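(* Let $Q$ be the quiver arising from a connected finite groupoid. Then $Q$ satisfies the quantum Yang–Baxter equation.
   Context: The quiver arising from a groupoid $\mathcal{G}$ (finitely many objects, finite hom-sets) has the objects as vertices and one arrow $x\to y$ for each morphism in $\mathrm{Hom}(x,y)$ (identities included); its adjacency matrix is $A_{xy}=|\mathrm{Hom}(x,y)|$. The groupoid is connected if $\mathrm{Hom}(x,y)\neq\emptyset$ for all objects $x,y$. An $m^2\times m^2$ matrix $X$ satisfies the quantum Yang–Baxter equation if $(X\otimes I_m)(I_m\otimes X)(X\otimes I_m)=(I_m\otimes X)(X\otimes I_m)(I_m\otimes X)$ ($\otimes$ the Kronecker product). A quiver with $m\times m$ adjacency matrix $A$ satisfies the quantum Yang–Baxter equation if the matrix $A\otimes A$ does. *)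

theory Defs
  imports "Jordan_Normal_Form.Matrix"
begin

definition groupoid :: "'o set \<Rightarrow> ('o \<Rightarrow> 'o \<Rightarrow> 'm set) \<Rightarrow> ('m \<Rightarrow> 'm \<Rightarrow> 'm)
    \<Rightarrow> ('o \<Rightarrow> 'm) \<Rightarrow> ('m \<Rightarrow> 'm) \<Rightarrow> bool" where
  "groupoid Ob Hom cmp ident iv \<longleftrightarrow>
     (\<forall>x\<in>Ob. \<forall>y\<in>Ob. \<forall>x'\<in>Ob. \<forall>y'\<in>Ob. (x, y) \<noteq> (x', y') \<longrightarrow> Hom x y \<inter> Hom x' y' = {}) \<and>
     (\<forall>x y. (x \<notin> Ob \<or> y \<notin> Ob) \<longrightarrow> Hom x y = {}) \<and>
     (\<forall>x\<in>Ob. \<forall>y\<in>Ob. \<forall>z\<in>Ob. \<forall>f\<in>Hom x y. \<forall>g\<in>Hom y z. cmp g f \<in> Hom x z) \<and>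
     (\<forall>w\<in>Ob. \<forall>x\<in>Ob. \<forall>y\<in>Ob. \<forall>z\<in>Ob. \<forall>f\<in>Hom w x. \<forall>g\<in>Hom x y. \<forall>h\<in>Hom y z.
        cmp h (cmp g f) = cmp (cmp h g) f) \<and>
     (\<forall>x\<in>Ob. ident x \<in> Hom x x) \<and>
     (\<forall>x\<in>Ob. \<forall>y\<in>Ob. \<forall>f\<in>Hom x y. cmp (ident y) f = f \<and> cmp f (ident x) = f) \<and>
     (\<forall>x\<in>Ob. \<forall>y\<in>Ob. \<forall>f\<in>Hom x y.
        iv f \<in> Hom y x \<and> cmp (iv f) f = ident x \<and> cmp f (iv f) = ident y)"

definition finite_groupoid where
  "finite_groupoid Ob Hom cmp ident iv \<longleftrightarrow> groupoid Ob Hom cmp ident iv \<and>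
     finite Ob \<and> (\<forall>x\<in>Ob. \<forall>y\<in>Ob. finite (Hom x y))"

definition connected_groupoid where
  "connected_groupoid Ob Hom \<longleftrightarrow> (\<forall>x\<in>Ob. \<forall>y\<in>Ob. Hom x y \<noteq> {})"

text \<open>Adjacency matrix of the quiver of the groupoid, w.r.t. an ordering
  enum : {0..<card Ob} -> Ob of the objects.\<close>
definition adj_matrix :: "'o set \<Rightarrow> ('o \<Rightarrow> 'o \<Rightarrow> 'm set) \<Rightarrow> (nat \<Rightarrow> 'o) \<Rightarrow> nat mat" where
  "adj_matrix Ob Hom enum = mat (card Ob) (card Ob) (\<lambda>(i, j). card (Hom (enum i) (enum j)))"

definition kron :: "'a::semiring_1 mat \<Rightarrow> 'a mat \<Rightarrow> 'a mat" where
  "kron A B = mat (dim_row A * dim_row B) (dim_col A * dim_col B)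
     (\<lambda>(i, j). A $$ (i div dim_row B, j div dim_col B) * B $$ (i mod dim_row B, j mod dim_col B))"

definition QYBE :: "nat \<Rightarrow> 'a::semiring_1 mat \<Rightarrow> bool" where
  "QYBE m X \<longleftrightarrow> X \<in> carrier_mat (m * m) (m * m) \<and>
     kron X (1\<^sub>m m) * kron (1\<^sub>m m) X * kron X (1\<^sub>m m) =
     kron (1\<^sub>m m) X * kron X (1\<^sub>m m) * kron (1\<^sub>m m) X"

text \<open>A quiver with m x m adjacency matrix A satisfies QYBE iff A \<otimes> A does.\<close>
definition quiver_QYBE :: "'a::semiring_1 mat \<Rightarrow> bool" where
  "quiver_QYBE A \<longleftrightarrow> QYBE (dim_row A) (kron A A)"

end

(*
  In a connected groupoid, f |-> h o f o g for fixed arrows g : z -> x and h : y -> w is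
  injective from Hom x y to Hom z w (undo it with the inverses of h and g), so all hom-sets
  have the same size k: the adjacency matrix is the constant n x n matrix k and its Kronecker
  square is the constant n^2 x n^2 matrix k^2.

  For a constant m^2 x m^2 matrix X = (c), read an index l < m^3 as three base-m digits.
  The (i, j) entry of X (x) I is c if i and j have the same last digit and 0 otherwise; that
  of I (x) X is c if they have the same first digit. Summing over the middle digit, the
  product of either with the other, and of a constant matrix with either, is again constant,
  so both sides of the Yang-Baxter equation are the constant matrix m^3 c^3.
*)
theory Submission
  imports Defs
begin

lemma sum_lessThan_mult_split:
  fixes f :: "nat \<Rightarrow> 'a::comm_monoid_add"
  shows "(\<Sum>l<n * k. f l) = (\<Sum>a<n. \<Sum>r<k. f (a * k + r))"
proof -
  have "sum f {a * k..<a * k + k} = (\<Sum>r<k. f (a * k + r))" for a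
    using sum.shift_bounds_nat_ivl[of f 0 "a * k" k] by (simp add: atLeast0LessThan add.commute)
  then show ?thesis by (simp flip: sum.nat_group)
qed

lemma sum_lessThan_cube_div_mod:
  fixes g :: "nat \<Rightarrow> nat \<Rightarrow> 'a::semiring_1"
  shows "(\<Sum>l<m * m * m. g (l div (m * m)) (l mod m)) = of_nat m * (\<Sum>a<m. \<Sum>r<m. g a r)"
proof -
  have inner: "(\<Sum>s<m * m. g ((a * (m * m) + s) div (m * m)) ((a * (m * m) + s) mod m))
      = of_nat m * (\<Sum>r<m. g a r)" for a
  proof -
    have "(a * (m * m) + s) div (m * m) = a" if "s < m * m" for s
    proof -
      have "(a * (m * m) + s) div (m * m) = a + s div (m * m)"
        using that by (intro div_mult_self3) (auto intro: gr0I)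
      with that show ?thesis by simp
    qed
    then have "(\<Sum>s<m * m. g ((a * (m * m) + s) div (m * m)) ((a * (m * m) + s) mod m))
        = (\<Sum>s<m * m. g a (s mod m))"
      by (intro sum.cong refl) (simp add: mod_mult_self3[of "a * m" m, unfolded mult.assoc])
    also have "\<dots> = (\<Sum>b<m. \<Sum>r<m. g a r)"
      by (simp add: sum_lessThan_mult_split[of _ m m] mod_mult_self3)
    finally show ?thesis by simp
  qed
  have "(\<Sum>l<m * m * m. g (l div (m * m)) (l mod m))
      = (\<Sum>a<m. \<Sum>s<m * m. g ((a * (m * m) + s) div (m * m)) ((a * (m * m) + s) mod m))"
    by (simp only: mult.assoc[of m m m] sum_lessThan_mult_split[of _ m "m * m"])
  also have "\<dots> = of_nat m * (\<Sum>a<m. \<Sum>r<m. g a r)"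
    by (simp only: inner sum_distrib_left)
  finally show ?thesis .
qed

lemma dim_kron [simp]:
  "dim_row (kron A B) = dim_row A * dim_row B"
  "dim_col (kron A B) = dim_col A * dim_col B"
  unfolding kron_def by simp_all

lemma kron_carrier_mat:
  "A \<in> carrier_mat a b \<Longrightarrow> B \<in> carrier_mat a' b' \<Longrightarrow> kron A B \<in> carrier_mat (a * a') (b * b')"
  unfolding kron_def by auto

lemma index_kron:
  assumes "i < dim_row A * dim_row B" and "j < dim_col A * dim_col B"
  shows "kron A B $$ (i, j)
    = A $$ (i div dim_row B, j div dim_col B) * B $$ (i mod dim_row B, j mod dim_col B)"
  using assms unfolding kron_def by simp

lemma div_mod_less_mult:
  fixes i :: nat
  assumes "i < a * b"
  shows "i div b < a" and "i mod b < b"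
proof -
  show "i div b < a"
    using assms by (simp add: less_mult_imp_div_less)
  show "i mod b < b"
    using assms by (cases "b = 0") simp_all
qed

lemma kron_const_mat:
  "kron (mat a b (\<lambda>_. c)) (mat a' b' (\<lambda>_. d)) = mat (a * a') (b * b') (\<lambda>_. c * d)"
  by (rule eq_matI) (simp_all add: index_kron div_mod_less_mult)

lemma index_kron_const_mat_one:
  assumes "i < m * m * m" and "j < m * m * m"
  shows "kron (mat (m * m) (m * m) (\<lambda>_. c)) (1\<^sub>m m) $$ (i, j)
      = (if i mod m = j mod m then c else 0)"
    and "kron (1\<^sub>m m) (mat (m * m) (m * m) (\<lambda>_. c)) $$ (i, j)
      = (if i div (m * m) = j div (m * m) then c else 0)"
proof -
  have "i div m < m * m" "i mod m < m" "j div m < m * m" "j mod m < m"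
    using assms by (simp_all add: div_mod_less_mult)
  then show "kron (mat (m * m) (m * m) (\<lambda>_. c)) (1\<^sub>m m) $$ (i, j)
      = (if i mod m = j mod m then c else 0)"
    using assms by (simp add: index_kron)
  have "i div (m * m) < m" "i mod (m * m) < m * m" "j div (m * m) < m" "j mod (m * m) < m * m"
    using assms by (simp_all only: mult.assoc[of m m m] div_mod_less_mult)
  then show "kron (1\<^sub>m m) (mat (m * m) (m * m) (\<lambda>_. c)) $$ (i, j)
      = (if i div (m * m) = j div (m * m) then c else 0)"
    using assms by (simp add: index_kron mult.assoc)
qed

lemma index_mult_mat_sum:
  assumes "i < dim_row A" and "j < dim_col B" and "dim_col A = dim_row B"
  shows "(A * B) $$ (i, j) = (\<Sum>l<dim_row B. A $$ (i, l) * B $$ (l, j))"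
  using assms by (simp add: scalar_prod_def atLeast0LessThan)

lemma mult_mat_const_cube:
  fixes A B :: "'a::semiring_1 mat"
  assumes A: "A \<in> carrier_mat (m * m * m) (m * m * m)" and B: "B \<in> carrier_mat (m * m * m) (m * m * m)"
    and entry: "\<And>i k l. i < m * m * m \<Longrightarrow> k < m * m * m \<Longrightarrow> l < m * m * m \<Longrightarrow>
      A $$ (i, l) * B $$ (l, k) = g i k (l div (m * m)) (l mod m)"
    and sum: "\<And>i k. i < m * m * m \<Longrightarrow> k < m * m * m \<Longrightarrow> (\<Sum>a<m. \<Sum>r<m. g i k a r) = e"
  shows "A * B = mat (m * m * m) (m * m * m) (\<lambda>_. of_nat m * e)"
proof (rule eq_matI)
  fix i k assume "i < dim_row (mat (m * m * m) (m * m * m) (\<lambda>_. of_nat m * e))"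
    and "k < dim_col (mat (m * m * m) (m * m * m) (\<lambda>_. of_nat m * e :: 'a))"
  then have ik: "i < m * m * m" "k < m * m * m" by simp_all
  have "(A * B) $$ (i, k) = (\<Sum>l<m * m * m. A $$ (i, l) * B $$ (l, k))"
    using A B ik by (subst index_mult_mat_sum) auto
  also have "\<dots> = (\<Sum>l<m * m * m. g i k (l div (m * m)) (l mod m))"
    using entry ik by simp
  also have "\<dots> = of_nat m * e"
    using sum[OF ik] by (simp add: sum_lessThan_cube_div_mod)
  finally show "(A * B) $$ (i, k) = mat (m * m * m) (m * m * m) (\<lambda>_. of_nat m * e) $$ (i, k)"
    using ik by simp
qed (use A B in simp_all)

lemma QYBE_const_mat:
  fixes c :: "'a::comm_semiring_1"
  shows "QYBE m (mat (m * m) (m * m) (\<lambda>_. c))"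
proof -
  let ?N = "m * m * m"
  let ?const = "\<lambda>d. mat ?N ?N (\<lambda>_. d) :: 'a mat"
  define L where "L = kron (mat (m * m) (m * m) (\<lambda>_. c)) (1\<^sub>m m)"
  define R where "R = kron (1\<^sub>m m) (mat (m * m) (m * m) (\<lambda>_. c))"
  have L: "L \<in> carrier_mat ?N ?N"
    unfolding L_def by (intro kron_carrier_mat) auto
  have R: "R \<in> carrier_mat ?N ?N"
    unfolding R_def mult.assoc[of m m m] by (intro kron_carrier_mat) auto
  have L_entry: "L $$ (i, j) = (if i mod m = j mod m then c else 0)"
    and R_entry: "R $$ (i, j) = (if i div (m * m) = j div (m * m) then c else 0)"
    if "i < ?N" and "j < ?N" for i j
    unfolding L_def R_def using that by (simp_all add: index_kron_const_mat_one)
  have bounds: "i mod m < m" "i div (m * m) < m" if "i < ?N" for i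
    using that div_mod_less_mult[of i "m * m" m] div_mod_less_mult[of i m "m * m"]
    by (simp_all only: mult.assoc)
  have LR: "L * R = ?const (of_nat m * (c * c))"
    by (rule mult_mat_const_cube[OF L R,
          where g = "\<lambda>i k a r. if r = i mod m then if a = k div (m * m) then c * c else 0 else 0"])
      (simp_all add: L_entry R_entry bounds)
  have RL: "R * L = ?const (of_nat m * (c * c))"
    by (rule mult_mat_const_cube[OF R L,
          where g = "\<lambda>i k a r. if r = k mod m then if a = i div (m * m) then c * c else 0 else 0"])
      (simp_all add: L_entry R_entry bounds)
  have DL: "?const d * L = ?const (of_nat m * (of_nat m * (d * c)))" for d
    by (rule mult_mat_const_cube[OF _ L, where g = "\<lambda>i k a r. if r = k mod m then d * c else 0"])
      (simp_all add: L_entry bounds)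
  have DR: "?const d * R = ?const (of_nat m * (of_nat m * (d * c)))" for d
    by (rule mult_mat_const_cube[OF _ R, where g = "\<lambda>i k a r. if a = k div (m * m) then d * c else 0"])
      (simp_all add: R_entry bounds flip: sum_distrib_left)
  have "L * R * L = R * L * R"
    by (simp only: LR RL DL DR)
  then show ?thesis
    unfolding QYBE_def L_def R_def by simp
qed

lemma groupoidD:
  assumes "groupoid Ob Hom cmp ident iv"
  shows groupoid_Hom_empty: "x \<notin> Ob \<or> y \<notin> Ob \<Longrightarrow> Hom x y = {}"
    and groupoid_cmp_closed: "x \<in> Ob \<Longrightarrow> y \<in> Ob \<Longrightarrow> z \<in> Ob \<Longrightarrow>
      f \<in> Hom x y \<Longrightarrow> g \<in> Hom y z \<Longrightarrow> cmp g f \<in> Hom x z"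
    and groupoid_cmp_assoc: "w \<in> Ob \<Longrightarrow> x \<in> Ob \<Longrightarrow> y \<in> Ob \<Longrightarrow> z \<in> Ob \<Longrightarrow>
      f \<in> Hom w x \<Longrightarrow> g \<in> Hom x y \<Longrightarrow> h \<in> Hom y z \<Longrightarrow> cmp h (cmp g f) = cmp (cmp h g) f"
    and groupoid_ident_cmp: "x \<in> Ob \<Longrightarrow> y \<in> Ob \<Longrightarrow> f \<in> Hom x y \<Longrightarrow> cmp (ident y) f = f"
    and groupoid_cmp_ident: "x \<in> Ob \<Longrightarrow> y \<in> Ob \<Longrightarrow> f \<in> Hom x y \<Longrightarrow> cmp f (ident x) = f"
    and groupoid_iv_closed: "x \<in> Ob \<Longrightarrow> y \<in> Ob \<Longrightarrow> f \<in> Hom x y \<Longrightarrow> iv f \<in> Hom y x"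
    and groupoid_iv_cmp: "x \<in> Ob \<Longrightarrow> y \<in> Ob \<Longrightarrow> f \<in> Hom x y \<Longrightarrow> cmp (iv f) f = ident x"
    and groupoid_cmp_iv: "x \<in> Ob \<Longrightarrow> y \<in> Ob \<Longrightarrow> f \<in> Hom x y \<Longrightarrow> cmp f (iv f) = ident y"
  using assms unfolding groupoid_def by simp_all

lemma groupoid_Hom_in_Ob:
  assumes "groupoid Ob Hom cmp ident iv" and "f \<in> Hom x y"
  shows "x \<in> Ob" and "y \<in> Ob"
  using groupoid_Hom_empty[OF assms(1), of x y] assms(2) by auto

lemma groupoid_cmp_in_Hom:
  assumes G: "groupoid Ob Hom cmp ident iv" and f: "f \<in> Hom x y" and g: "g \<in> Hom y z"
  shows "cmp g f \<in> Hom x z"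
  using groupoid_cmp_closed[OF G _ _ _ f g] groupoid_Hom_in_Ob[OF G f] groupoid_Hom_in_Ob[OF G g]
  by blast

lemma groupoid_iv_cmp_cmp:
  assumes G: "groupoid Ob Hom cmp ident iv" and f: "f \<in> Hom x y" and h: "h \<in> Hom y z"
  shows "cmp (iv h) (cmp h f) = f"
proof -
  have Ob: "x \<in> Ob" "y \<in> Ob" "z \<in> Ob"
    using groupoid_Hom_in_Ob[OF G f] groupoid_Hom_in_Ob[OF G h] by auto
  have "cmp (iv h) (cmp h f) = cmp (cmp (iv h) h) f"
    using groupoid_cmp_assoc[OF G Ob(1,2,3,2) f h groupoid_iv_closed[OF G Ob(2,3) h]] .
  also have "\<dots> = f"
    using groupoid_iv_cmp[OF G Ob(2,3) h] groupoid_ident_cmp[OF G Ob(1,2) f] by simp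
  finally show ?thesis .
qed

lemma groupoid_cmp_cmp_iv:
  assumes G: "groupoid Ob Hom cmp ident iv" and g: "g \<in> Hom w x" and f: "f \<in> Hom x y"
  shows "cmp (cmp f g) (iv g) = f"
proof -
  have Ob: "w \<in> Ob" "x \<in> Ob" "y \<in> Ob"
    using groupoid_Hom_in_Ob[OF G g] groupoid_Hom_in_Ob[OF G f] by auto
  have "cmp (cmp f g) (iv g) = cmp f (cmp g (iv g))"
    using groupoid_cmp_assoc[OF G Ob(2,1,2,3) groupoid_iv_closed[OF G Ob(1,2) g] g f] by simp
  also have "\<dots> = f"
    using groupoid_cmp_iv[OF G Ob(1,2) g] groupoid_cmp_ident[OF G Ob(2,3) f] by simp
  finally show ?thesis .
qed

lemma groupoid_card_Hom_le:
  assumes G: "groupoid Ob Hom cmp ident iv" and "finite (Hom z w)"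
    and g: "g \<in> Hom z x" and h: "h \<in> Hom y w"
  shows "card (Hom x y) \<le> card (Hom z w)"
proof (rule card_inj_on_le)
  show "inj_on (\<lambda>f. cmp h (cmp f g)) (Hom x y)"
  proof (rule inj_on_inverseI)
    fix f assume f: "f \<in> Hom x y"
    have "cmp (iv h) (cmp h (cmp f g)) = cmp f g"
      using groupoid_iv_cmp_cmp[OF G groupoid_cmp_in_Hom[OF G g f] h] .
    then show "cmp (cmp (iv h) (cmp h (cmp f g))) (iv g) = f"
      using groupoid_cmp_cmp_iv[OF G g f] by simp
  qed
  show "(\<lambda>f. cmp h (cmp f g)) ` Hom x y \<subseteq> Hom z w"
    by (auto intro: groupoid_cmp_in_Hom[OF G _ h] groupoid_cmp_in_Hom[OF G g])
qed fact

lemma connected_finite_groupoid_card_Hom_const: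
  assumes "finite_groupoid Ob Hom cmp ident iv" and "connected_groupoid Ob Hom"
  obtains k where "\<And>x y. x \<in> Ob \<Longrightarrow> y \<in> Ob \<Longrightarrow> card (Hom x y) = k"
proof (cases "Ob = {}")
  case False
  then obtain x0 where x0: "x0 \<in> Ob" by blast
  have G: "groupoid Ob Hom cmp ident iv"
    and fin: "\<And>x y. x \<in> Ob \<Longrightarrow> y \<in> Ob \<Longrightarrow> finite (Hom x y)"
    using assms(1) unfolding finite_groupoid_def by auto
  have arrow: "\<exists>f. f \<in> Hom x y" if "x \<in> Ob" "y \<in> Ob" for x y
    using assms(2) that unfolding connected_groupoid_def by blast
  have "card (Hom x y) = card (Hom x0 x0)" if xy: "x \<in> Ob" "y \<in> Ob" for x y
  proof (rule antisym)
    obtain g h where "g \<in> Hom x0 x" "h \<in> Hom y x0"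
      using arrow xy x0 by blast
    then show "card (Hom x y) \<le> card (Hom x0 x0)"
      using fin[OF x0 x0] by (rule groupoid_card_Hom_le[OF G, rotated])
    obtain g' h' where "g' \<in> Hom x x0" "h' \<in> Hom x0 y"
      using arrow xy x0 by blast
    then show "card (Hom x0 x0) \<le> card (Hom x y)"
      using fin[OF xy] by (rule groupoid_card_Hom_le[OF G, rotated])
  qed
  then show ?thesis by (rule that)
qed (use that in blast)

lemma adj_matrix_const:
  assumes enum: "bij_betw enum {0..<card Ob} Ob"
    and k: "\<And>x y. x \<in> Ob \<Longrightarrow> y \<in> Ob \<Longrightarrow> card (Hom x y) = k"
  shows "adj_matrix Ob Hom enum = mat (card Ob) (card Ob) (\<lambda>_. k)"
proof -
  have "enum i \<in> Ob" if "i < card Ob" for i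
    using bij_betwE[OF enum] that by simp
  then show ?thesis
    unfolding adj_matrix_def by (intro eq_matI) (simp_all add: k)
qed

theorem corollary2p14:
  fixes Ob :: "'o set" and Hom :: "'o \<Rightarrow> 'o \<Rightarrow> 'm set"
    and cmp :: "'m \<Rightarrow> 'm \<Rightarrow> 'm" and ident :: "'o \<Rightarrow> 'm" and iv :: "'m \<Rightarrow> 'm"
    and enum :: "nat \<Rightarrow> 'o"
  assumes "finite_groupoid Ob Hom cmp ident iv"
    and "connected_groupoid Ob Hom"
    and "bij_betw enum {0..<card Ob} Ob"
  shows "quiver_QYBE (adj_matrix Ob Hom enum)"
proof -
  obtain k where "\<And>x y. x \<in> Ob \<Longrightarrow> y \<in> Ob \<Longrightarrow> card (Hom x y) = k"
    using connected_finite_groupoid_card_Hom_const[OF assms(1,2)] by blast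
  then have A: "adj_matrix Ob Hom enum = mat (card Ob) (card Ob) (\<lambda>_. k)"
    using adj_matrix_const[OF assms(3)] by blast
  show ?thesis
    unfolding quiver_QYBE_def A kron_const_mat by (simp add: QYBE_const_mat)
qed

end
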